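(* Let $G=(V\cup\{s,t\},E)$ be an undirected series-parallel graph with source $s$ and sink $t$, let $x$ be a least core payoff of the corresponding Edge Path Coalitional Game, and let $e\in E$ be an edge contained in no minimum cardinality $s$-$t$ edge cut of $G$ (i.e., $C_e(G)=\emptyset$). Then $x_e=0$.
   Context: An undirected graph $G$ with source $s$ and sink $t$ is series-parallel if it can be reduced to a single edge between two vertices by repeatedly (1) replacing a pair of parallel edges by a single edge joining their common endpoints, and (2) replacing the two edges incident to a degree-2 vertex other than $s,t$ by a single edge (removing that vertex). $\mathcal{C}(G)$ denotes the set of minimum cardinality $s$-$t$ edge cuts of $G$ and $C_e(G)=\{S\in\mathcal{C}(G): e\in S\}$. The EPCG has players $N=E$ and $v(S)=1$ iff the edges of $S$ contain an $s$-$t$ path, else $0$. For payoff $x$, $e(x,S)=x(S)-v(S)$ with $x(S)=\sum_{i\in S}x_i$; the $\epsilon$-core is $\{x: x(N)=v(N),\ e(x,S)\ge-\epsilon\ \forall S\}$, and the least core is the $\epsilon$-core for the smallest $\epsilon$ for which it is non-empty (with payoffs $x_i\ge 0$). *)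

theory Defs
  imports Complex_Main "HOL-Library.Multiset"
begin

text \<open>Undirected multigraphs: a finite set E of edge identifiers, each edge with a
  two-element set of endpoints  ends e.  Series-parallel reductions act on the
  multiset of endpoint sets.\<close>

inductive sp_step :: "'v \<Rightarrow> 'v \<Rightarrow> 'v set multiset \<Rightarrow> 'v set multiset \<Rightarrow> bool"
  for s t :: 'v where
  parallel: "sp_step s t (M + {#{u, v}, {u, v}#}) (M + {#{u, v}#})"
| series: "\<lbrakk> w \<notin> {s, t}; u \<noteq> w; v \<noteq> w; \<forall>f \<in># M. w \<notin> f \<rbrakk>
           \<Longrightarrow> sp_step s t (M + {#{u, w}, {w, v}#}) (M + {#{u, v}#})"

definition series_parallel :: "'e set \<Rightarrow> ('e \<Rightarrow> 'v set) \<Rightarrow> 'v \<Rightarrow> 'v \<Rightarrow> bool" where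
  "series_parallel E ends s t \<longleftrightarrow>
     finite E \<and> s \<noteq> t \<and> (\<forall>e\<in>E. card (ends e) = 2) \<and>
     (sp_step s t)\<^sup>*\<^sup>* (image_mset ends (mset_set E)) {#{s, t}#}"

definition has_st_path :: "('e \<Rightarrow> 'v set) \<Rightarrow> 'v \<Rightarrow> 'v \<Rightarrow> 'e set \<Rightarrow> bool" where
  "has_st_path ends s t S \<longleftrightarrow>
     (\<exists>vs. vs \<noteq> [] \<and> hd vs = s \<and> last vs = t \<and> distinct vs \<and>
        (\<forall>i. Suc i < length vs \<longrightarrow> (\<exists>e\<in>S. ends e = {vs ! i, vs ! Suc i})))"

definition st_cut :: "'e set \<Rightarrow> ('e \<Rightarrow> 'v set) \<Rightarrow> 'v \<Rightarrow> 'v \<Rightarrow> 'e set \<Rightarrow> bool" where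
  "st_cut E ends s t C \<longleftrightarrow> C \<subseteq> E \<and> \<not> has_st_path ends s t (E - C)"

definition min_cuts :: "'e set \<Rightarrow> ('e \<Rightarrow> 'v set) \<Rightarrow> 'v \<Rightarrow> 'v \<Rightarrow> 'e set set" where
  "min_cuts E ends s t =
     {C. st_cut E ends s t C \<and> (\<forall>C'. st_cut E ends s t C' \<longrightarrow> card C \<le> card C')}"

definition cuts_containing :: "'e set \<Rightarrow> ('e \<Rightarrow> 'v set) \<Rightarrow> 'v \<Rightarrow> 'v \<Rightarrow> 'e \<Rightarrow> 'e set set" where
  "cuts_containing E ends s t e = {C \<in> min_cuts E ends s t. e \<in> C}"

definition epcg_value :: "('e \<Rightarrow> 'v set) \<Rightarrow> 'v \<Rightarrow> 'v \<Rightarrow> 'e set \<Rightarrow> real" where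
  "epcg_value ends s t S = (if has_st_path ends s t S then 1 else 0)"

definition excess :: "('e \<Rightarrow> 'v set) \<Rightarrow> 'v \<Rightarrow> 'v \<Rightarrow> ('e \<Rightarrow> real) \<Rightarrow> 'e set \<Rightarrow> real" where
  "excess ends s t x S = sum x S - epcg_value ends s t S"

definition eps_core :: "'e set \<Rightarrow> ('e \<Rightarrow> 'v set) \<Rightarrow> 'v \<Rightarrow> 'v \<Rightarrow> real \<Rightarrow> ('e \<Rightarrow> real) set" where
  "eps_core E ends s t \<epsilon> =
     {x. (\<forall>i\<in>E. 0 \<le> x i) \<and> sum x E = epcg_value ends s t E \<and>
         (\<forall>S. S \<subseteq> E \<longrightarrow> excess ends s t x S \<ge> - \<epsilon>)}"

definition least_core :: "'e set \<Rightarrow> ('e \<Rightarrow> 'v set) \<Rightarrow> 'v \<Rightarrow> 'v \<Rightarrow> ('e \<Rightarrow> real) set" where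
  "least_core E ends s t =
     {x. \<exists>\<epsilon>. x \<in> eps_core E ends s t \<epsilon> \<and>
            (\<forall>\<epsilon>'. eps_core E ends s t \<epsilon>' \<noteq> {} \<longrightarrow> \<epsilon> \<le> \<epsilon>')}"

end

theory Submission
  imports Defs
begin

text \<open>Let \<open>c\<close> be the size of a minimum cut. Spreading the unit payoff evenly over a minimum
  cut is a \<open>(1 - 1/c)\<close>-core payoff, so in the least core every \<open>s\<close>-\<open>t\<close> path \<open>S\<close> gets
  \<open>x(S) \<ge> 1/c\<close>. Hence the \<open>x\<close>-distance \<open>d\<close> from \<open>s\<close> satisfies \<open>d(t) \<ge> 1/c\<close> and
  \<open>|d(u) - d(v)| \<le> x_f\<close> on every edge \<open>f = uv\<close>. Slicing \<open>d\<close> into threshold cuts (a discrete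
  coarea argument) gives \<open>c \<cdot> d(t) \<le> \<Sum>\<^sub>f w\<^sub>f |d(u) - d(v)|\<close> for every edge weighting \<open>w\<close> under
  which all cuts weigh at least \<open>c\<close>. Since no minimum cut contains \<open>e\<close>, deleting \<open>e\<close> from any
  cut leaves at least \<open>c\<close> edges, so the weighting that ignores \<open>e\<close> qualifies, and therefore
  \<open>1 \<le> x(E - {e}) = 1 - x_e\<close>.\<close>

lemma has_st_path_mono:
  assumes "has_st_path ends s t S" "S \<subseteq> T"
  shows "has_st_path ends s t T"
  using assms unfolding has_st_path_def by (metis subsetD)

lemma has_st_path_refl: "has_st_path ends s s S"
  unfolding has_st_path_def by (rule exI[of _ "[s]"]) auto

lemma not_has_st_path_empty:
  assumes "s \<noteq> t"
  shows "\<not> has_st_path ends s t {}"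
proof
  assume "has_st_path ends s t {}"
  then obtain vs where "vs \<noteq> []" "hd vs = s" "last vs = t" "\<not> Suc 0 < length vs"
    unfolding has_st_path_def by blast
  then show False
    using assms by (cases vs) auto
qed

lemma list_leaves_set:
  "vs \<noteq> [] \<Longrightarrow> hd vs \<in> A \<Longrightarrow> last vs \<notin> A \<Longrightarrow>
    \<exists>i. Suc i < length vs \<and> vs ! i \<in> A \<and> vs ! Suc i \<notin> A"
proof (induction vs)
  case (Cons a xs)
  show ?case
  proof (cases "xs \<noteq> [] \<and> hd xs \<in> A")
    case True
    with Cons obtain i where "Suc i < length xs" "xs ! i \<in> A" "xs ! Suc i \<notin> A"
      by auto
    then show ?thesis
      by (intro exI[of _ "Suc i"]) auto
  next
    case False
    with Cons show ?thesis
      by (cases xs) (auto intro: exI[of _ 0])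
  qed
qed simp

definition edge_boundary :: "'e set \<Rightarrow> ('e \<Rightarrow> 'v set) \<Rightarrow> 'v set \<Rightarrow> 'e set" where
  "edge_boundary E ends A = {f \<in> E. ends f \<inter> A \<noteq> {} \<and> ends f - A \<noteq> {}}"

lemma has_st_path_leaves_set:
  assumes "has_st_path ends s t S" "s \<in> A" "t \<notin> A"
  shows "\<exists>f\<in>S. ends f \<inter> A \<noteq> {} \<and> ends f - A \<noteq> {}"
proof -
  obtain vs where vs: "vs \<noteq> []" "hd vs = s" "last vs = t"
    "\<forall>i. Suc i < length vs \<longrightarrow> (\<exists>f\<in>S. ends f = {vs ! i, vs ! Suc i})"
    using assms(1) unfolding has_st_path_def by blast
  then obtain i where "Suc i < length vs" "vs ! i \<in> A" "vs ! Suc i \<notin> A"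
    using list_leaves_set[of vs A] assms by auto
  then show ?thesis
    using vs(4) by blast
qed

lemma st_cut_edge_boundary:
  assumes "s \<in> A" "t \<notin> A"
  shows "st_cut E ends s t (edge_boundary E ends A)"
  unfolding st_cut_def
proof
  show "edge_boundary E ends A \<subseteq> E"
    by (auto simp: edge_boundary_def)
  show "\<not> has_st_path ends s t (E - edge_boundary E ends A)"
    using has_st_path_leaves_set[OF _ assms] by (fastforce simp: edge_boundary_def)
qed

lemma has_st_path_insert_edge:
  assumes "has_st_path ends s u S" "ends f = {u, v}"
  shows "has_st_path ends s v (insert f S)"
proof -
  obtain vs where vs: "vs \<noteq> []" "hd vs = s" "last vs = u" "distinct vs"
    and steps: "\<forall>i. Suc i < length vs \<longrightarrow> (\<exists>g\<in>S. ends g = {vs ! i, vs ! Suc i})"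
    using assms(1) unfolding has_st_path_def by blast
  show ?thesis
  proof (cases "v \<in> set vs")
    case True
    then obtain j where j: "j < length vs" "vs ! j = v"
      by (meson in_set_conv_nth)
    let ?ws = "take (Suc j) vs"
    have "?ws \<noteq> [] \<and> hd ?ws = s \<and> distinct ?ws"
      using vs by (simp add: hd_take)
    moreover have "last ?ws = v"
      using j by (simp add: take_Suc_conv_app_nth)
    moreover have "\<forall>i. Suc i < length ?ws \<longrightarrow> (\<exists>g\<in>insert f S. ends g = {?ws ! i, ?ws ! Suc i})"
      using steps by auto
    ultimately show ?thesis
      unfolding has_st_path_def by blast
  next
    case False
    let ?ws = "vs @ [v]"
    have "?ws \<noteq> [] \<and> hd ?ws = s \<and> last ?ws = v \<and> distinct ?ws"
      using vs False by simp
    moreover have "\<exists>g\<in>insert f S. ends g = {?ws ! i, ?ws ! Suc i}" if i: "Suc i < length ?ws" for i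
    proof (cases "Suc i < length vs")
      case True
      then show ?thesis
        using steps by (auto simp: nth_append)
    next
      case False
      then have "i = length vs - 1"
        using i by simp
      then have "?ws ! i = u" "?ws ! Suc i = v"
        using vs(1,3) by (auto simp: nth_append last_conv_nth)
      then show ?thesis
        using assms(2) by auto
    qed
    ultimately show ?thesis
      unfolding has_st_path_def by blast
  qed
qed

definition osc :: "('v \<Rightarrow> real) \<Rightarrow> 'v set \<Rightarrow> real" where
  "osc p A = Max (p ` A) - Min (p ` A)"

lemma osc_pair: "osc p {u, v} = \<bar>p u - p v\<bar>"
  by (auto simp: osc_def max_def min_def)

lemma card_eq_2_pair: "card A = 2 \<Longrightarrow> \<exists>u v. A = {u, v}"
  by (auto simp: card_2_iff)

lemma osc_truncate_pair:
  fixes p :: "'v \<Rightarrow> real"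
  assumes "0 < a" "p u = 0 \<or> a \<le> p u" "p v = 0 \<or> a \<le> p v"
  shows "osc p {u, v} = osc (\<lambda>y. max (p y - a) 0) {u, v} + (if (p u = 0) = (p v = 0) then 0 else a)"
  using assms by (auto simp: osc_pair)

lemma sum_osc_truncate:
  fixes p :: "'v \<Rightarrow> real"
  assumes fin: "finite E" and pairs: "\<forall>f\<in>E. card (ends f) = 2"
    and "0 < a" and gap: "\<forall>v\<in>\<Union>(ends ` E). p v = 0 \<or> a \<le> p v"
  shows "(\<Sum>f\<in>E. w f * osc p (ends f)) =
    (\<Sum>f\<in>E. w f * osc (\<lambda>y. max (p y - a) 0) (ends f))
      + a * sum w (edge_boundary E ends {v. p v = 0})"
proof -
  let ?q = "\<lambda>y. max (p y - a) 0" and ?B = "edge_boundary E ends {v. p v = 0}"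
  have edge: "w f * osc p (ends f) = w f * osc ?q (ends f) + a * (w f * of_bool (f \<in> ?B))"
    if f: "f \<in> E" for f
  proof -
    obtain u v where uv: "ends f = {u, v}"
      using card_eq_2_pair pairs f by blast
    then have "f \<in> ?B \<longleftrightarrow> (p u = 0) \<noteq> (p v = 0)"
      using f by (auto simp: edge_boundary_def)
    moreover have "osc p {u, v} = osc ?q {u, v} + (if (p u = 0) = (p v = 0) then 0 else a)"
      using f uv gap \<open>0 < a\<close> by (intro osc_truncate_pair) auto
    ultimately show ?thesis
      using uv by (auto simp: algebra_simps)
  qed
  have "sum w ?B = (\<Sum>f\<in>E. w f * of_bool (f \<in> ?B))"
    using fin by (simp add: edge_boundary_def Int_def)
  then show ?thesis
    by (simp add: edge sum.distrib sum_distrib_left)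
qed

lemma obtain_lowest_positive_level:
  fixes p :: "'v \<Rightarrow> real"
  assumes "finite V" "t \<in> V" "p t \<noteq> 0" "\<forall>v. 0 \<le> p v"
  obtains a z where "z \<in> V" "p z = a" "0 < a" "\<forall>v\<in>V. p v = 0 \<or> a \<le> p v"
proof -
  define Z where "Z = {v \<in> V. p v \<noteq> 0}"
  have "finite (p ` Z)" "p t \<in> p ` Z"
    using assms(1-3) by (simp_all add: Z_def)
  then have "Min (p ` Z) \<in> p ` Z" "\<forall>v\<in>Z. Min (p ` Z) \<le> p v"
    by (auto intro: Min_in)
  then obtain z where "z \<in> Z" "p z = Min (p ` Z)"
    by (metis imageE)
  moreover have "0 < p z"
    using \<open>z \<in> Z\<close> assms(4) by (simp add: Z_def order_less_le)
  ultimately show ?thesis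
    using that \<open>\<forall>v\<in>Z. Min (p ` Z) \<le> p v\<close> by (auto simp: Z_def)
qed

lemma card_support_truncate_less:
  fixes p :: "'v \<Rightarrow> real"
  assumes "finite V" "z \<in> V" "p z = a" "0 < a"
  shows "card {v \<in> V. max (p v - a) 0 \<noteq> 0} < card {v \<in> V. p v \<noteq> 0}"
proof -
  have "card {v \<in> V. max (p v - a) 0 \<noteq> 0} \<le> card ({v \<in> V. p v \<noteq> 0} - {z})"
    using assms by (intro card_mono) auto
  also have "\<dots> < card {v \<in> V. p v \<noteq> 0}"
    using assms by (intro card_Diff1_less) auto
  finally show ?thesis .
qed

text \<open>The coarea inequality: \<open>p\<close> is peeled off level by level, each level being a threshold
  cut of weight at least \<open>c\<close>.\<close>

lemma coarea_cut_bound: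
  fixes p :: "'v \<Rightarrow> real" and w :: "'e \<Rightarrow> real"
  assumes fin: "finite E" and pairs: "\<forall>f\<in>E. card (ends f) = 2"
    and w_nonneg: "\<forall>f\<in>E. 0 \<le> w f"
    and cuts: "\<forall>C. st_cut E ends s t C \<longrightarrow> c \<le> sum w C"
    and "\<forall>v. 0 \<le> p v" "p s = 0"
  shows "c * p t \<le> (\<Sum>f\<in>E. w f * osc p (ends f))"
proof -
  define V where "V = insert t (\<Union>(ends ` E))"
  have "finite V" "t \<in> V"
    using fin pairs by (auto simp: V_def intro: card_ge_0_finite)
  have "\<forall>p. (\<forall>v. 0 \<le> p v) \<longrightarrow> p s = 0 \<longrightarrow> card {v \<in> V. p v \<noteq> 0} = n \<longrightarrow>
    c * p t \<le> (\<Sum>f\<in>E. w f * osc p (ends f))" for n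
  proof (induction n rule: less_induct)
    case (less n)
    show ?case
    proof (intro allI impI)
      fix p :: "'v \<Rightarrow> real"
      assume p_nonneg: "\<forall>v. 0 \<le> p v" and "p s = 0" and n: "card {v \<in> V. p v \<noteq> 0} = n"
      show "c * p t \<le> (\<Sum>f\<in>E. w f * osc p (ends f))"
      proof (cases "p t = 0")
        case True
        have "0 \<le> osc p (ends f)" if "f \<in> E" for f
          using card_eq_2_pair pairs that by (force simp: osc_pair)
        then show ?thesis
          using True w_nonneg by (simp add: sum_nonneg)
      next
        case False
        obtain a z where "z \<in> V" "p z = a" "0 < a" and gap: "\<forall>v\<in>V. p v = 0 \<or> a \<le> p v"
          by (rule obtain_lowest_positive_level[OF \<open>finite V\<close> \<open>t \<in> V\<close> False p_nonneg])
        define q where "q = (\<lambda>y. max (p y - a) 0)"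
        have "card {v \<in> V. q v \<noteq> 0} < n"
          unfolding q_def n[symmetric] using \<open>finite V\<close> \<open>z \<in> V\<close> \<open>p z = a\<close> \<open>0 < a\<close>
          by (rule card_support_truncate_less)
        moreover have "\<forall>v. 0 \<le> q v" "q s = 0"
          using \<open>p s = 0\<close> \<open>0 < a\<close> by (simp_all add: q_def)
        ultimately have IH: "c * q t \<le> (\<Sum>f\<in>E. w f * osc q (ends f))"
          using less.IH by blast
        have "a \<le> p t"
          using gap \<open>t \<in> V\<close> False by blast
        then have "q t = p t - a"
          by (simp add: q_def)
        have "st_cut E ends s t (edge_boundary E ends {v. p v = 0})"
          using \<open>p s = 0\<close> False by (intro st_cut_edge_boundary) auto
        then have "a * c \<le> a * sum w (edge_boundary E ends {v. p v = 0})"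
          using cuts \<open>0 < a\<close> by simp
        then have "c * p t \<le>
            (\<Sum>f\<in>E. w f * osc q (ends f)) + a * sum w (edge_boundary E ends {v. p v = 0})"
          using IH \<open>q t = p t - a\<close> by (simp add: algebra_simps)
        also have "\<dots> = (\<Sum>f\<in>E. w f * osc p (ends f))"
          unfolding q_def using fin pairs \<open>0 < a\<close> gap
          by (intro sum_osc_truncate[symmetric]) (auto simp: V_def)
        finally show ?thesis .
      qed
    qed
  qed
  then show ?thesis
    using assms(5,6) by blast
qed

text \<open>The \<open>x\<close>-length of a shortest path from \<open>s\<close> to \<open>v\<close>, capped at \<open>D\<close>; the cap keeps the
  minimum over a nonempty set when \<open>v\<close> is unreachable.\<close>

definition path_dist ::
    "'e set \<Rightarrow> ('e \<Rightarrow> 'v set) \<Rightarrow> ('e \<Rightarrow> real) \<Rightarrow> real \<Rightarrow> 'v \<Rightarrow> 'v \<Rightarrow> real" where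
  "path_dist E ends x D s v = Min (insert D (sum x ` {S. S \<subseteq> E \<and> has_st_path ends s v S}))"

lemma finite_path_lengths:
  "finite E \<Longrightarrow> finite (insert D (sum x ` {S. S \<subseteq> E \<and> has_st_path ends s v S}))"
  by (simp add: finite_subset[of _ "Pow E"] subset_iff)

lemma path_dist_le_cap:
  assumes "finite E"
  shows "path_dist E ends x D s v \<le> D"
  unfolding path_dist_def by (rule Min_le[OF finite_path_lengths[OF assms]]) simp

lemma path_dist_le_path:
  assumes "finite E" "S \<subseteq> E" "has_st_path ends s v S"
  shows "path_dist E ends x D s v \<le> sum x S"
  unfolding path_dist_def using assms(2,3) by (intro Min_le[OF finite_path_lengths[OF assms(1)]]) blast

lemma path_dist_cases:
  assumes "finite E"
  obtains "path_dist E ends x D s v = D"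
  | S where "S \<subseteq> E" "has_st_path ends s v S" "path_dist E ends x D s v = sum x S"
proof -
  have "path_dist E ends x D s v \<in> insert D (sum x ` {S. S \<subseteq> E \<and> has_st_path ends s v S})"
    unfolding path_dist_def by (rule Min_in[OF finite_path_lengths[OF assms]]) simp
  then show ?thesis
    using that by blast
qed

lemma path_dist_nonneg:
  assumes "finite E" "\<forall>i\<in>E. 0 \<le> x i" "0 \<le> D"
  shows "0 \<le> path_dist E ends x D s v"
  using assms(1)
proof (cases rule: path_dist_cases[of E ends x D s v])
  case (2 S)
  then show ?thesis
    using assms(2) by (simp add: subset_iff sum_nonneg)
qed (use assms in simp)

lemma path_dist_source:
  assumes "finite E" "\<forall>i\<in>E. 0 \<le> x i" "0 \<le> D"
  shows "path_dist E ends x D s s = 0"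
proof -
  have "path_dist E ends x D s s \<le> sum x {}"
    by (rule path_dist_le_path[OF assms(1)]) (simp_all add: has_st_path_refl)
  then show ?thesis
    using path_dist_nonneg[OF assms, of ends s s] by simp
qed

lemma path_dist_sink:
  assumes "finite E" and "\<forall>S\<subseteq>E. has_st_path ends s t S \<longrightarrow> D \<le> sum x S"
  shows "path_dist E ends x D s t = D"
  using assms(1)
proof (cases rule: path_dist_cases[of E ends x D s t])
  case (2 S)
  then have "D \<le> path_dist E ends x D s t"
    using assms(2) by simp
  then show ?thesis
    using path_dist_le_cap[OF assms(1), of ends x D s t] by linarith
qed

lemma path_dist_edge:
  assumes "finite E" "\<forall>i\<in>E. 0 \<le> x i" "f \<in> E" "ends f = {u, v}"
  shows "path_dist E ends x D s v \<le> path_dist E ends x D s u + x f"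
  using assms(1)
proof (cases rule: path_dist_cases[of E ends x D s u])
  case 1
  have "path_dist E ends x D s v \<le> D"
    by (rule path_dist_le_cap[OF assms(1)])
  moreover have "0 \<le> x f"
    using assms(2,3) by blast
  ultimately show ?thesis
    using 1 by linarith
next
  case (2 S)
  have "path_dist E ends x D s v \<le> sum x (insert f S)"
    using 2 assms(1,3,4) by (intro path_dist_le_path has_st_path_insert_edge) auto
  also have "\<dots> \<le> sum x S + x f"
    using finite_subset[OF 2(1) assms(1)] assms(2,3) by (simp add: sum.insert_if)
  finally show ?thesis
    using 2 by simp
qed

lemma osc_path_dist_le:
  assumes "finite E" "\<forall>i\<in>E. 0 \<le> x i" "f \<in> E" "card (ends f) = 2"
  shows "osc (path_dist E ends x D s) (ends f) \<le> x f"
proof -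
  obtain u v where uv: "ends f = {u, v}"
    using card_eq_2_pair assms(4) by blast
  have "path_dist E ends x D s v \<le> path_dist E ends x D s u + x f"
    using assms(1-3) uv by (rule path_dist_edge)
  moreover have "path_dist E ends x D s u \<le> path_dist E ends x D s v + x f"
    using assms(1-3) uv insert_commute[of u v "{}"] by (metis path_dist_edge)
  ultimately show ?thesis
    by (simp add: uv osc_pair abs_le_iff)
qed

lemma path_length_cut_weight_duality:
  fixes x w :: "'e \<Rightarrow> real"
  assumes fin: "finite E" and pairs: "\<forall>f\<in>E. card (ends f) = 2"
    and x_nonneg: "\<forall>f\<in>E. 0 \<le> x f" and w_nonneg: "\<forall>f\<in>E. 0 \<le> w f" and "0 \<le> D"
    and paths: "\<forall>S\<subseteq>E. has_st_path ends s t S \<longrightarrow> D \<le> sum x S"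
    and cuts: "\<forall>C. st_cut E ends s t C \<longrightarrow> c \<le> sum w C"
  shows "c * D \<le> (\<Sum>f\<in>E. w f * x f)"
proof -
  let ?d = "path_dist E ends x D s"
  have "c * D = c * ?d t"
    using path_dist_sink[OF fin paths] by simp
  also have "\<dots> \<le> (\<Sum>f\<in>E. w f * osc ?d (ends f))"
    using fin pairs w_nonneg cuts path_dist_nonneg[OF fin x_nonneg \<open>0 \<le> D\<close>]
      path_dist_source[OF fin x_nonneg \<open>0 \<le> D\<close>]
    by (intro coarea_cut_bound) auto
  also have "\<dots> \<le> (\<Sum>f\<in>E. w f * x f)"
    using fin pairs x_nonneg w_nonneg by (intro sum_mono mult_left_mono osc_path_dist_le) auto
  finally show ?thesis .
qed

lemma cut_payoff_in_eps_core:
  assumes "finite E" "st_cut E ends s t C" "C \<noteq> {}" "has_st_path ends s t E"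
  shows "(\<lambda>i. if i \<in> C then 1 / real (card C) else 0) \<in> eps_core E ends s t (1 - 1 / real (card C))"
proof -
  let ?y = "\<lambda>i. if i \<in> C then 1 / real (card C) else 0"
  have "C \<subseteq> E"
    using assms(2) by (simp add: st_cut_def)
  then have "finite C"
    using assms(1) by (rule finite_subset)
  have "sum ?y E = sum ?y C"
    using assms(1) \<open>C \<subseteq> E\<close> by (intro sum.mono_neutral_right) auto
  also have "\<dots> = 1"
    using \<open>finite C\<close> assms(3) by simp
  finally have "sum ?y E = 1" .
  moreover have "- (1 - 1 / real (card C)) \<le> excess ends s t ?y S" if S: "S \<subseteq> E" for S
  proof (cases "has_st_path ends s t S")
    case True
    then have "\<not> S \<subseteq> E - C"
      using has_st_path_mono[OF True] assms(2) by (auto simp: st_cut_def)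
    then obtain i where "i \<in> S" "i \<in> C"
      using S by blast
    then have "?y i \<le> sum ?y S"
      using finite_subset[OF S assms(1)] by (intro member_le_sum) auto
    then show ?thesis
      using True \<open>i \<in> C\<close> by (simp add: excess_def epcg_value_def)
  next
    case False
    have "1 / real (card C) \<le> 1"
      using \<open>finite C\<close> assms(3) by (simp add: card_gt_0_iff Suc_leI)
    moreover have "0 \<le> sum ?y S"
      by (rule sum_nonneg) simp
    ultimately show ?thesis
      using False by (simp add: excess_def epcg_value_def)
  qed
  ultimately show ?thesis
    using assms(4) by (simp add: eps_core_def epcg_value_def)
qed

lemma least_core_path_bound:
  assumes "finite E" "x \<in> least_core E ends s t"
    and "st_cut E ends s t C" "C \<noteq> {}" "has_st_path ends s t E"
    and "S \<subseteq> E" "has_st_path ends s t S"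
  shows "1 / real (card C) \<le> sum x S"
proof -
  obtain \<epsilon> where x: "x \<in> eps_core E ends s t \<epsilon>"
    and least: "\<forall>\<epsilon>'. eps_core E ends s t \<epsilon>' \<noteq> {} \<longrightarrow> \<epsilon> \<le> \<epsilon>'"
    using assms(2) by (auto simp: least_core_def)
  have "\<epsilon> \<le> 1 - 1 / real (card C)"
    using least cut_payoff_in_eps_core[OF assms(1,3-5)] by blast
  moreover have "- \<epsilon> \<le> sum x S - 1"
    using x assms(6,7) unfolding eps_core_def excess_def epcg_value_def by auto
  ultimately show ?thesis
    by linarith
qed

lemma min_cuts_nonempty:
  assumes "finite E" "s \<noteq> t"
  shows "min_cuts E ends s t \<noteq> {}"
proof -
  have "st_cut E ends s t E"
    using not_has_st_path_empty[OF assms(2)] by (simp add: st_cut_def)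
  then show ?thesis
    using ex_has_least_nat[of "st_cut E ends s t" E card] by (auto simp: min_cuts_def)
qed

lemma card_min_cut_pos:
  assumes "finite E" "C\<^sub>0 \<in> min_cuts E ends s t" "has_st_path ends s t E"
  shows "0 < card C\<^sub>0"
proof -
  have "C\<^sub>0 \<subseteq> E" "C\<^sub>0 \<noteq> {}"
    using assms(2,3) by (auto simp: min_cuts_def st_cut_def)
  then show ?thesis
    using assms(1) finite_subset by (auto simp: card_gt_0_iff)
qed

lemma card_min_cut_le_weight_without_edge:
  assumes "finite E" "C\<^sub>0 \<in> min_cuts E ends s t" "cuts_containing E ends s t e = {}"
  shows "\<forall>C. st_cut E ends s t C \<longrightarrow> real (card C\<^sub>0) \<le> (\<Sum>f\<in>C. of_bool (f \<noteq> e))"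
proof (intro allI impI)
  fix C
  assume C: "st_cut E ends s t C"
  then have "finite C" "C \<inter> {f. f \<noteq> e} = C - {e}" "card C\<^sub>0 \<le> card C"
    using assms(1,2) finite_subset by (auto simp: min_cuts_def st_cut_def)
  moreover have "card C\<^sub>0 \<noteq> card C" if "e \<in> C"
    using assms(2,3) C that by (auto simp: cuts_containing_def min_cuts_def)
  ultimately show "real (card C\<^sub>0) \<le> (\<Sum>f\<in>C. of_bool (f \<noteq> e))"
    by (cases "e \<in> C") auto
qed

theorem lemma1:
  fixes E :: "'e set" and ends :: "'e \<Rightarrow> 'v set" and s t :: 'v
    and x :: "'e \<Rightarrow> real" and e :: 'e
  assumes "series_parallel E ends s t"
    and "x \<in> least_core E ends s t"
    and "e \<in> E"
    and "cuts_containing E ends s t e = {}"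
  shows "x e = 0"
proof -
  have fin: "finite E" and "s \<noteq> t" and pairs: "\<forall>f\<in>E. card (ends f) = 2"
    using assms(1) by (auto simp: series_parallel_def)
  have x_nonneg: "\<forall>i\<in>E. 0 \<le> x i" and x_total: "sum x E = epcg_value ends s t E"
    using assms(2) by (auto simp: least_core_def eps_core_def)
  show ?thesis
  proof (cases "has_st_path ends s t E")
    case False
    then show ?thesis
      using x_total x_nonneg sum_nonneg_eq_0_iff[OF fin] assms(3) by (auto simp: epcg_value_def)
  next
    case True
    obtain C\<^sub>0 where C\<^sub>0: "C\<^sub>0 \<in> min_cuts E ends s t"
      using min_cuts_nonempty[OF fin \<open>s \<noteq> t\<close>] by blast
    have "0 < card C\<^sub>0"
      using card_min_cut_pos[OF fin C\<^sub>0 True] .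
    then have "st_cut E ends s t C\<^sub>0" "C\<^sub>0 \<noteq> {}"
      using C\<^sub>0 by (auto simp: min_cuts_def)
    then have paths: "\<forall>S\<subseteq>E. has_st_path ends s t S \<longrightarrow> 1 / real (card C\<^sub>0) \<le> sum x S"
      using least_core_path_bound[OF fin assms(2) _ _ True] by blast
    have "1 = real (card C\<^sub>0) * (1 / real (card C\<^sub>0))"
      using \<open>0 < card C\<^sub>0\<close> by simp
    also have "\<dots> \<le> (\<Sum>f\<in>E. of_bool (f \<noteq> e) * x f)"
      by (rule path_length_cut_weight_duality[OF fin pairs x_nonneg _ _ paths
            card_min_cut_le_weight_without_edge[OF fin C\<^sub>0 assms(4)]]) simp_all
    also have "\<dots> = sum x E - x e"
      using fin assms(3)
      by (simp add: mult.commute sum_diff1 Collect_neg_eq singleton_conv Diff_eq[symmetric])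
    finally show ?thesis
      using x_total True x_nonneg assms(3) by (force simp: epcg_value_def)
  qed
qed

end
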